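(* Let $X$ be a separable Banach space, $Y$ a closed subspace of $X$, $\xi: Y\to X$ the identical embedding, and $\Gamma$ a linear (not necessarily closed) subspace of $Y^{*}$. Then for every ordinal $\alpha$ we have $(\xi^{*})^{-1}(\Gamma_{(\alpha)}) = \big((\xi^{*})^{-1}\Gamma\big)_{(\alpha)}$, where $\xi^*: X^*\to Y^*$ is the adjoint (restriction) operator.
   Context: For a Banach space $Z$ and a subset $\Gamma\subset Z^*$, the weak$^*$-derived set $\Gamma_{(1)}$ is the set of all limits of weak$^*$-convergent sequences of elements of $\Gamma$. Weak$^*$-derived sets of arbitrary ordinal order are defined inductively by $\Gamma_{(0)}=\Gamma$ and $\Gamma_{(\alpha)}=\bigcup_{\beta<\alpha}(\Gamma_{(\beta)})_{(1)}$ for $\alpha\ge 1$. *)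

theory Defs
  imports "HOL-Analysis.Analysis"
begin

definition wstar_derived :: "((nat \<Rightarrow> 'f) \<Rightarrow> 'f \<Rightarrow> bool) \<Rightarrow> 'f set \<Rightarrow> 'f set" where
  "wstar_derived conv G = {x. \<exists>s. (\<forall>n. s n \<in> G) \<and> conv s x}"

definition iter_derived ::
  "((nat \<Rightarrow> 'f) \<Rightarrow> 'f \<Rightarrow> bool) \<Rightarrow> 'f set \<Rightarrow> 'o::wellorder \<Rightarrow> 'f set" where
  "iter_derived conv G = wfrec {(b, a). b < a}
     (\<lambda>rec a. if (\<forall>b. \<not> b < a) then G
              else (\<Union>b\<in>{b. b < a}. wstar_derived conv (rec b)))"

definition wstar_conv_X :: "(nat \<Rightarrow> ('a::real_normed_vector \<Rightarrow>\<^sub>L real)) \<Rightarrow> ('a \<Rightarrow>\<^sub>L real) \<Rightarrow> bool" where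
  "wstar_conv_X s f \<longleftrightarrow> (\<forall>x. (\<lambda>n. blinfun_apply (s n) x) \<longlonglongrightarrow> blinfun_apply f x)"

text \<open>The dual Y^* of a subspace Y of X: bounded linear functionals on Y,
represented canonically as functions on X vanishing outside Y.\<close>
definition dual_sub :: "'a::real_normed_vector set \<Rightarrow> ('a \<Rightarrow> real) set" where
  "dual_sub Y = {g. (\<forall>x\<in>Y. \<forall>y\<in>Y. g (x + y) = g x + g y)
                  \<and> (\<forall>c. \<forall>x\<in>Y. g (c *\<^sub>R x) = c * g x)
                  \<and> (\<exists>K. \<forall>x\<in>Y. \<bar>g x\<bar> \<le> K * norm x)
                  \<and> (\<forall>x. x \<notin> Y \<longrightarrow> g x = 0)}"

definition wstar_conv_Y :: "'a::real_normed_vector set \<Rightarrow> (nat \<Rightarrow> ('a \<Rightarrow> real)) \<Rightarrow> ('a \<Rightarrow> real) \<Rightarrow> bool" where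
  "wstar_conv_Y Y s g \<longleftrightarrow> g \<in> dual_sub Y \<and> (\<forall>y\<in>Y. (\<lambda>n. s n y) \<longlonglongrightarrow> g y)"

definition restr_adj :: "'a set \<Rightarrow> ('a::real_normed_vector \<Rightarrow>\<^sub>L real) \<Rightarrow> ('a \<Rightarrow> real)" where
  "restr_adj Y f = (\<lambda>y. if y \<in> Y then blinfun_apply f y else 0)"

definition lin_subspace_dual :: "'a::real_normed_vector set \<Rightarrow> ('a \<Rightarrow> real) set \<Rightarrow> bool" where
  "lin_subspace_dual Y \<Gamma> \<longleftrightarrow> \<Gamma> \<subseteq> dual_sub Y \<and> (\<lambda>_. 0) \<in> \<Gamma>
     \<and> (\<forall>g\<in>\<Gamma>. \<forall>h\<in>\<Gamma>. (\<lambda>x. g x + h x) \<in> \<Gamma>)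
     \<and> (\<forall>c. \<forall>g\<in>\<Gamma>. (\<lambda>x. c * g x) \<in> \<Gamma>)"

end

(* Restriction to Y maps weak-star convergent sequences of X^* to weak-star convergent sequences
   of Y^*, which gives one inclusion at every level.  Conversely, let t_n -> f|Y weak-star in Y^*.
   By the uniform boundedness principle the t_n are equibounded, so by Hahn-Banach the functionals
   t_n - f|Y extend to e_n in X^* with a common norm bound.  As X is separable, a subsequence
   e_(r k) converges weak-star to some e_0, which vanishes on Y; then s_k = f + e_(r k) - e_0
   restricts to t_(r k) and converges weak-star to f.  Transfinite induction over the levels of
   the derived sets finishes the proof. *)

theory Submission
  imports Defs "HOL-Library.Diagonal_Subsequence"
begin

section \<open>Iterated derived sets under a map of sequential convergences\<close>

lemma iter_derived_eq:
  "iter_derived conv G (a::'o::wellorder) =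
    (if \<forall>b. \<not> b < a then G
     else (\<Union>b\<in>{b. b < a}. wstar_derived conv (iter_derived conv G b)))"
  unfolding iter_derived_def by (subst wfrec[OF wellorder_class.wf]) (simp add: cut_apply)

lemma iter_derived_subset:
  assumes "G \<subseteq> H" and "\<And>s x. conv s x \<Longrightarrow> x \<in> H"
  shows "iter_derived conv G (a::'o::wellorder) \<subseteq> H"
  using assms by (subst iter_derived_eq) (auto simp: wstar_derived_def)

lemma vimage_iter_derived:
  fixes \<phi> :: "'f \<Rightarrow> 'g" and a :: "'o::wellorder"
  assumes push: "\<And>s f. conv1 s f \<Longrightarrow> conv2 (\<phi> \<circ> s) (\<phi> f)"
    and lift: "\<And>t f. (\<And>n. t n \<in> H) \<Longrightarrow> conv2 t (\<phi> f) \<Longrightarrow>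
      \<exists>s r. strict_mono r \<and> (\<forall>k. \<phi> (s k) = t (r k)) \<and> conv1 s f"
    and G_H: "G \<subseteq> H" and limit_H: "\<And>t g. conv2 t g \<Longrightarrow> g \<in> H"
  shows "\<phi> -` iter_derived conv2 G a = iter_derived conv1 (\<phi> -` G) a"
proof (induction a rule: less_induct)
  case (less a)
  show ?case
  proof (cases "\<forall>b. \<not> b < a")
    case True
    then show ?thesis by (subst (1 2) iter_derived_eq) simp
  next
    case False
    show ?thesis
    proof (intro equalityI subsetI)
      fix f assume "f \<in> \<phi> -` iter_derived conv2 G a"
      then obtain b t where b: "b < a" and t: "\<And>n. t n \<in> iter_derived conv2 G b"
        and conv: "conv2 t (\<phi> f)"
        using False by (subst (asm) iter_derived_eq) (auto simp: wstar_derived_def)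
      have "t n \<in> H" for n
        using iter_derived_subset[OF G_H limit_H] t by (rule subsetD)
      then obtain s r where "\<And>k. \<phi> (s k) = t (r k)" and "conv1 s f"
        using lift conv by blast
      moreover from this have "s k \<in> iter_derived conv1 (\<phi> -` G) b" for k
        using less.IH[OF b] t by (metis vimageI2)
      ultimately show "f \<in> iter_derived conv1 (\<phi> -` G) a"
        using False b by (subst iter_derived_eq) (auto simp: wstar_derived_def)
    next
      fix f assume "f \<in> iter_derived conv1 (\<phi> -` G) a"
      then obtain b s where b: "b < a" and s: "\<And>n. s n \<in> iter_derived conv1 (\<phi> -` G) b"
        and conv: "conv1 s f"
        using False by (subst (asm) iter_derived_eq) (auto simp: wstar_derived_def)
      have "(\<phi> \<circ> s) n \<in> iter_derived conv2 G b" for n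
        using less.IH[OF b] s by auto
      with push[OF conv] have "\<phi> f \<in> wstar_derived conv2 (iter_derived conv2 G b)"
        unfolding wstar_derived_def by blast
      then show "f \<in> \<phi> -` iter_derived conv2 G a"
        using False b by (subst iter_derived_eq) auto
    qed
  qed
qed

lemma restr_adj_in_dual_sub:
  assumes "subspace Y"
  shows "restr_adj Y f \<in> dual_sub Y"
proof -
  have "\<forall>x\<in>Y. \<bar>blinfun_apply f x\<bar> \<le> norm f * norm x"
    by (metis norm_blinfun real_norm_def)
  then show ?thesis
    using assms unfolding dual_sub_def restr_adj_def
    by (auto simp: subspace_add subspace_scale blinfun.add_right blinfun.scaleR_right)
qed

lemma wstar_conv_Y_restr_adj:
  assumes "subspace Y" and "wstar_conv_X s f"
  shows "wstar_conv_Y Y (restr_adj Y \<circ> s) (restr_adj Y f)"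
  using assms restr_adj_in_dual_sub[OF assms(1)]
  unfolding wstar_conv_Y_def wstar_conv_X_def by (simp add: restr_adj_def)

lemma dual_subD:
  assumes "g \<in> dual_sub Y"
  shows dual_sub_add: "\<And>x y. x \<in> Y \<Longrightarrow> y \<in> Y \<Longrightarrow> g (x + y) = g x + g y"
    and dual_sub_scaleR: "\<And>c x. x \<in> Y \<Longrightarrow> g (c *\<^sub>R x) = c * g x"
    and dual_sub_bounded: "\<exists>K. \<forall>x\<in>Y. \<bar>g x\<bar> \<le> K * norm x"
    and dual_sub_outside: "\<And>x. x \<notin> Y \<Longrightarrow> g x = 0"
  using assms by (auto simp: dual_sub_def)

lemma dual_sub_diff:
  assumes "g \<in> dual_sub Y" "subspace Y" "x \<in> Y" "y \<in> Y"
  shows "g (x - y) = g x - g y"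
  using dual_sub_add[OF assms(1) assms(3), of "- y"]
    dual_sub_scaleR[OF assms(1) assms(4), of "-1"] subspace_neg[OF assms(2,4)]
  by simp

lemma continuous_on_dual_sub:
  assumes "g \<in> dual_sub Y" "subspace Y"
  shows "continuous_on Y g"
proof -
  obtain K where K: "\<And>x. x \<in> Y \<Longrightarrow> \<bar>g x\<bar> \<le> K * norm x"
    using dual_sub_bounded[OF assms(1)] by blast
  have "dist (g x) (g y) \<le> \<bar>K\<bar> * dist x y" if "x \<in> Y" "y \<in> Y" for x y
  proof -
    have "dist (g x) (g y) = \<bar>g (x - y)\<bar>"
      using dual_sub_diff[OF assms that] by (simp add: dist_real_def)
    also have "\<dots> \<le> K * norm (x - y)"
      using K subspace_diff[OF assms(2) that] by blast
    also have "\<dots> \<le> \<bar>K\<bar> * dist x y"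
      by (simp add: dist_norm mult_right_mono)
    finally show ?thesis .
  qed
  then have "\<bar>K\<bar>-lipschitz_on Y g"
    by (intro lipschitz_onI) auto
  then show ?thesis by (rule lipschitz_on_continuous_on)
qed

lemma dual_sub_bound_from_ball:
  assumes g: "g \<in> dual_sub Y" and Y: "subspace Y" and "r > 0"
    and ball: "\<And>z. z \<in> Y \<Longrightarrow> norm z < r \<Longrightarrow> \<bar>g z\<bar> \<le> C"
    and "y \<in> Y"
  shows "\<bar>g y\<bar> \<le> (2 * C / r) * norm y"
proof (cases "y = 0")
  case True
  then show ?thesis
    using dual_sub_scaleR[OF g subspace_0[OF Y], of 0] by simp
next
  case False
  define c where "c = r / (2 * norm y)"
  have c: "c > 0" and "norm (c *\<^sub>R y) < r"
    using False \<open>r > 0\<close> by (simp_all add: c_def)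
  then have "c * \<bar>g y\<bar> \<le> C"
    using ball[of "c *\<^sub>R y"] subspace_scale[OF Y \<open>y \<in> Y\<close>] dual_sub_scaleR[OF g \<open>y \<in> Y\<close>]
    by (simp add: abs_mult)
  then show ?thesis
    using c False \<open>r > 0\<close> by (simp add: c_def field_simps)
qed

section \<open>Uniform boundedness\<close>

lemma Baire_closed_cover_ball:
  fixes Y :: "'a::{real_normed_vector, complete_space} set"
  assumes "closed Y" and "Y \<noteq> {}" and closed_F: "\<And>m::nat. closed (F m)"
    and "\<And>m. F m \<subseteq> Y" and cover: "\<Union>(range F) = Y"
  shows "\<exists>m y0 r. r > 0 \<and> y0 \<in> Y \<and> ball y0 r \<inter> Y \<subseteq> F m"
proof -
  have complete: "completely_metrizable_space (top_of_set Y)"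
    using \<open>closed Y\<close> completely_metrizable_space_closedin completely_metrizable_space_euclidean
      closed_closedin by blast
  have closedin_F: "closedin (top_of_set Y) (F m)" for m
    by (rule closed_subset[OF assms(4) closed_F])
  have "\<exists>m. top_of_set Y interior_of F m \<noteq> {}"
  proof (rule ccontr)
    assume "\<nexists>m. top_of_set Y interior_of F m \<noteq> {}"
    then have "top_of_set Y interior_of \<Union>(range F) = {}"
      using complete closedin_F by (intro Baire_category_alt) auto
    then show False
      using cover \<open>Y \<noteq> {}\<close> interior_of_topspace[of "top_of_set Y"] by simp
  qed
  then obtain m y0 U where U: "openin (top_of_set Y) U" "y0 \<in> U" "U \<subseteq> F m"
    by (auto simp: interior_of_def)
  then obtain r where "r > 0" "ball y0 r \<inter> Y \<subseteq> U" and "y0 \<in> Y"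
    unfolding openin_contains_ball by blast
  then show ?thesis
    using U(3) by blast
qed

lemma uniform_boundedness_dual_sub:
  fixes Y :: "'a::banach set" and t :: "nat \<Rightarrow> 'a \<Rightarrow> real"
  assumes Y: "subspace Y" "closed Y" and t: "\<And>n. t n \<in> dual_sub Y"
    and bounded: "\<And>y. y \<in> Y \<Longrightarrow> bounded (range (\<lambda>n. t n y))"
  shows "\<exists>K. \<forall>n. \<forall>y\<in>Y. \<bar>t n y\<bar> \<le> K * norm y"
proof -
  define F where "F m = (\<Inter>n. {y\<in>Y. \<bar>t n y\<bar> \<le> real m})" for m :: nat
  have closed_F: "closed (F m)" for m
    unfolding F_def using Y(2) continuous_on_dual_sub[OF t Y(1)]
    by (intro closed_INT ballI continuous_on_closed_Collect_le continuous_intros) auto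
  have union_F: "\<Union>(range F) = Y"
  proof (intro equalityI subsetI)
    fix y assume "y \<in> Y"
    then obtain M where "\<And>n. \<bar>t n y\<bar> \<le> M"
      using bounded by (fastforce simp: bounded_iff)
    moreover obtain m :: nat where "M \<le> real m"
      using real_arch_simple by blast
    ultimately show "y \<in> \<Union>(range F)"
      using \<open>y \<in> Y\<close> by (auto simp: F_def intro: order_trans)
  qed (auto simp: F_def)
  have Y_ne: "Y \<noteq> {}"
    using subspace_0[OF Y(1)] by blast
  have F_Y: "F m \<subseteq> Y" for m
    by (auto simp: F_def)
  from Baire_closed_cover_ball[OF Y(2) Y_ne closed_F F_Y union_F]
  obtain m y0 r where r: "r > 0" and y0: "y0 \<in> Y" and ball: "ball y0 r \<inter> Y \<subseteq> F m"
    by blast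
  have "\<bar>t n z\<bar> \<le> 2 * real m" if "z \<in> Y" "norm z < r" for n z
  proof -
    have "y0 + z \<in> ball y0 r"
      using that by (simp add: dist_norm)
    then have "y0 + z \<in> F m" and "y0 \<in> F m"
      using centre_in_ball[of y0 r] r ball y0 subspace_add[OF Y(1) y0 that(1)] by blast+
    then have "\<bar>t n (y0 + z)\<bar> \<le> real m" and "\<bar>t n y0\<bar> \<le> real m"
      by (auto simp: F_def)
    then show ?thesis
      using dual_sub_add[OF t y0 that(1), of n] by linarith
  qed
  then show ?thesis
    using dual_sub_bound_from_ball[OF t Y(1) r(1)] by blast
qed

section \<open>Hahn-Banach extension\<close>

(* Partial extensions in the Hahn-Banach argument are handled as graphs, so that the union of a
   chain of them is again one. *)
definition dominated_linear_graph :: "real \<Rightarrow> ('a::real_normed_vector \<times> real) set \<Rightarrow> bool" where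
  "dominated_linear_graph K G \<longleftrightarrow>
     (\<forall>x a y b. (x, a) \<in> G \<longrightarrow> (y, b) \<in> G \<longrightarrow> (x + y, a + b) \<in> G)
     \<and> (\<forall>c x a. (x, a) \<in> G \<longrightarrow> (c *\<^sub>R x, c * a) \<in> G)
     \<and> (\<forall>x a. (x, a) \<in> G \<longrightarrow> a \<le> K * norm x)"

lemma dominated_linear_graphD:
  assumes "dominated_linear_graph K G"
  shows dominated_linear_graph_add: "(x, a) \<in> G \<Longrightarrow> (y, b) \<in> G \<Longrightarrow> (x + y, a + b) \<in> G"
    and dominated_linear_graph_scaleR: "(x, a) \<in> G \<Longrightarrow> (c *\<^sub>R x, c * a) \<in> G"
    and dominated_linear_graph_le: "(x, a) \<in> G \<Longrightarrow> a \<le> K * norm x"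
  using assms unfolding dominated_linear_graph_def by blast+

lemma dominated_linear_graph_abs_le:
  assumes "dominated_linear_graph K G" "(x, a) \<in> G"
  shows "\<bar>a\<bar> \<le> K * norm x"
  using dominated_linear_graph_le[OF assms(1) assms(2)]
    dominated_linear_graph_le[OF assms(1) dominated_linear_graph_scaleR[OF assms, of "-1"]]
  by simp

lemma dominated_linear_graph_unique:
  assumes "dominated_linear_graph K G" "(x, a) \<in> G" "(x, b) \<in> G"
  shows "a = b"
proof -
  have "(x + (-1) *\<^sub>R x, a + (-1) * b) \<in> G"
    using assms by (intro dominated_linear_graph_add dominated_linear_graph_scaleR)
  then show ?thesis
    using dominated_linear_graph_abs_le[OF assms(1)] by fastforce
qed

lemma dominated_linear_graph_Union:
  assumes "chain\<^sub>\<subseteq> C" and "\<And>G. G \<in> C \<Longrightarrow> dominated_linear_graph K G"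
  shows "dominated_linear_graph K (\<Union>C)"
  unfolding dominated_linear_graph_def
proof (intro conjI allI impI)
  fix x a y b assume "(x, a) \<in> \<Union>C" "(y, b) \<in> \<Union>C"
  then obtain G where "G \<in> C" "(x, a) \<in> G" "(y, b) \<in> G"
    using assms(1) unfolding chain_subset_def by blast
  then show "(x + y, a + b) \<in> \<Union>C"
    using assms(2) dominated_linear_graph_add by blast
qed (use assms(2) dominated_linear_graph_scaleR dominated_linear_graph_le in blast)+

lemma dominated_linear_graph_extension_value:
  assumes G: "dominated_linear_graph K G" and "(0, 0) \<in> G" and "K \<ge> 0"
  shows "\<exists>t. \<forall>x a. (x, a) \<in> G \<longrightarrow> a + t \<le> K * norm (x + x0) \<and> a - t \<le> K * norm (x - x0)"
proof -
  have bound: "a - K * norm (x - x0) \<le> K * norm (y + x0) - b"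
    if "(x, a) \<in> G" "(y, b) \<in> G" for x a y b
  proof -
    have "a + b \<le> K * norm ((x - x0) + (y + x0))"
      using dominated_linear_graph_le[OF G dominated_linear_graph_add[OF G that]] by simp
    also have "\<dots> \<le> K * (norm (x - x0) + norm (y + x0))"
      using \<open>K \<ge> 0\<close> norm_triangle_ineq by (rule mult_left_mono[rotated])
    finally show ?thesis by (simp add: algebra_simps)
  qed
  define S where "S = {a - K * norm (x - x0) | x a. (x, a) \<in> G}"
  have "S \<noteq> {}" and "bdd_above S"
    using \<open>(0, 0) \<in> G\<close> bound[OF _ \<open>(0, 0) \<in> G\<close>] by (auto simp: S_def bdd_above_def)
  then have "a - K * norm (x - x0) \<le> Sup S \<and> Sup S \<le> K * norm (x + x0) - a"
    if "(x, a) \<in> G" for x a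
    using that bound by (auto simp: S_def intro!: cSup_upper cSup_least)
  then show ?thesis
    by (intro exI[of _ "Sup S"]) force
qed

lemma dominated_linear_graph_extension_le:
  assumes G: "dominated_linear_graph K G" and "(x, a) \<in> G"
    and t: "\<And>x a. (x, a) \<in> G \<Longrightarrow> a + t \<le> K * norm (x + x0) \<and> a - t \<le> K * norm (x - x0)"
  shows "a + l * t \<le> K * norm (x + l *\<^sub>R x0)"
proof -
  consider "l = 0" | "l > 0" | "l < 0" by linarith
  then show ?thesis
  proof cases
    case 1
    then show ?thesis using dominated_linear_graph_le[OF G assms(2)] by simp
  next
    case 2
    have "a / l + t \<le> K * norm ((1 / l) *\<^sub>R x + x0)"
      using t[OF dominated_linear_graph_scaleR[OF G assms(2), of "1 / l"]] by simp
    then have "l * (a / l + t) \<le> l * (K * norm ((1 / l) *\<^sub>R x + x0))"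
      using 2 by (simp add: mult_left_mono)
    also have "l * (K * norm ((1 / l) *\<^sub>R x + x0)) = K * norm (l *\<^sub>R ((1 / l) *\<^sub>R x + x0))"
      using 2 by simp
    finally show ?thesis
      using 2 by (simp add: algebra_simps)
  next
    case 3
    define m where "m = - l"
    have m: "m > 0" using 3 by (simp add: m_def)
    have "a / m - t \<le> K * norm ((1 / m) *\<^sub>R x - x0)"
      using t[OF dominated_linear_graph_scaleR[OF G assms(2), of "1 / m"]] by simp
    then have "m * (a / m - t) \<le> m * (K * norm ((1 / m) *\<^sub>R x - x0))"
      using m by (simp add: mult_left_mono)
    also have "m * (K * norm ((1 / m) *\<^sub>R x - x0)) = K * norm (m *\<^sub>R ((1 / m) *\<^sub>R x - x0))"
      using m by simp
    finally show ?thesis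
      using m by (simp add: m_def algebra_simps)
  qed
qed

lemma dominated_linear_graph_extend:
  assumes G: "dominated_linear_graph K G" and "(0, 0) \<in> G" and "K \<ge> 0"
  shows "\<exists>G'. dominated_linear_graph K G' \<and> G \<subseteq> G' \<and> (\<exists>a. (x0, a) \<in> G')"
proof -
  obtain t where t: "\<And>x a. (x, a) \<in> G \<Longrightarrow> a + t \<le> K * norm (x + x0) \<and> a - t \<le> K * norm (x - x0)"
    using dominated_linear_graph_extension_value[OF assms] by blast
  define G' where "G' = {(x + l *\<^sub>R x0, a + l * t) | x a l. (x, a) \<in> G}"
  have "dominated_linear_graph K G'"
    unfolding dominated_linear_graph_def
  proof (intro conjI allI impI)
    fix x a y b assume "(x, a) \<in> G'" "(y, b) \<in> G'"
    then obtain x1 a1 l1 x2 a2 l2 where "(x1, a1) \<in> G" "(x2, a2) \<in> G"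
      "x = x1 + l1 *\<^sub>R x0" "a = a1 + l1 * t" "y = x2 + l2 *\<^sub>R x0" "b = a2 + l2 * t"
      unfolding G'_def by blast
    then have "(x + y, a + b) = ((x1 + x2) + (l1 + l2) *\<^sub>R x0, (a1 + a2) + (l1 + l2) * t)"
      and "(x1 + x2, a1 + a2) \<in> G"
      by (simp_all add: dominated_linear_graph_add[OF G] algebra_simps)
    then show "(x + y, a + b) \<in> G'"
      unfolding G'_def by blast
  next
    fix c x a assume "(x, a) \<in> G'"
    then obtain x1 a1 l where "(x1, a1) \<in> G" "x = x1 + l *\<^sub>R x0" "a = a1 + l * t"
      unfolding G'_def by blast
    then have "(c *\<^sub>R x, c * a) = (c *\<^sub>R x1 + (c * l) *\<^sub>R x0, c * a1 + (c * l) * t)"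
      by (simp add: algebra_simps)
    moreover have "(c *\<^sub>R x1, c * a1) \<in> G"
      using \<open>(x1, a1) \<in> G\<close> by (rule dominated_linear_graph_scaleR[OF G])
    ultimately show "(c *\<^sub>R x, c * a) \<in> G'"
      unfolding G'_def by blast
  next
    fix x a assume "(x, a) \<in> G'"
    then show "a \<le> K * norm x"
      unfolding G'_def using dominated_linear_graph_extension_le[OF G _ t] by blast
  qed
  moreover have "G \<subseteq> G'"
    unfolding G'_def by (force intro: exI[of _ 0])
  moreover have "(x0, t) \<in> G'"
    unfolding G'_def using \<open>(0, 0) \<in> G\<close> by (force intro: exI[of _ 1])
  ultimately show ?thesis by blast
qed

lemma dominated_linear_graph_blinfun:
  assumes G: "dominated_linear_graph K G" and total: "\<And>x. \<exists>a. (x, a) \<in> G"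
  shows "\<exists>h. \<forall>x. (x, blinfun_apply h x) \<in> G"
proof -
  define h where "h x = (SOME a. (x, a) \<in> G)" for x
  have hG: "(x, h x) \<in> G" for x
    unfolding h_def using total by (rule someI_ex)
  have h_eq: "h x = a" if "(x, a) \<in> G" for x a
    using dominated_linear_graph_unique[OF G hG that] .
  have "bounded_linear h"
  proof
    show "h (x + y) = h x + h y" for x y
      using h_eq dominated_linear_graph_add[OF G hG hG] .
    show "h (c *\<^sub>R x) = c *\<^sub>R h x" for c x
      using h_eq dominated_linear_graph_scaleR[OF G hG] by simp
    show "\<exists>K'. \<forall>x. norm (h x) \<le> norm x * K'"
      using dominated_linear_graph_abs_le[OF G hG] by (auto simp: mult.commute)
  qed
  then show ?thesis
    using hG by (intro exI[of _ "Blinfun h"]) (simp add: bounded_linear_Blinfun_apply)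
qed

theorem hahn_banach_extension:
  fixes Y :: "'a::real_normed_vector set" and g :: "'a \<Rightarrow> real"
  assumes Y: "subspace Y"
    and add: "\<And>x y. x \<in> Y \<Longrightarrow> y \<in> Y \<Longrightarrow> g (x + y) = g x + g y"
    and scaleR: "\<And>c x. x \<in> Y \<Longrightarrow> g (c *\<^sub>R x) = c * g x"
    and bound: "\<And>y. y \<in> Y \<Longrightarrow> \<bar>g y\<bar> \<le> K * norm y" and "K \<ge> 0"
  shows "\<exists>h. (\<forall>y\<in>Y. blinfun_apply h y = g y) \<and> (\<forall>x. \<bar>blinfun_apply h x\<bar> \<le> K * norm x)"
proof -
  define G0 where "G0 = {(y, g y) | y. y \<in> Y}"
  define A where "A = {G. dominated_linear_graph K G \<and> G0 \<subseteq> G}"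
  have "G0 \<in> A"
    unfolding A_def G0_def dominated_linear_graph_def
    using Y add scaleR bound by (auto simp: subspace_add subspace_scale abs_le_iff)
  have "\<forall>C\<in>chains A. \<exists>U\<in>A. \<forall>X\<in>C. X \<subseteq> U"
  proof
    fix C assume C: "C \<in> chains A"
    show "\<exists>U\<in>A. \<forall>X\<in>C. X \<subseteq> U"
    proof (cases "C = {}")
      case True
      then show ?thesis using \<open>G0 \<in> A\<close> by blast
    next
      case False
      then have "\<Union>C \<in> A"
        using C dominated_linear_graph_Union[of C K] by (auto simp: A_def chains_def)
      then show ?thesis by blast
    qed
  qed
  from Zorn_Lemma2[OF this] obtain M
    where M: "M \<in> A" and maximal: "\<And>X. X \<in> A \<Longrightarrow> M \<subseteq> X \<Longrightarrow> X = M"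
    by blast
  have G: "dominated_linear_graph K M" and "G0 \<subseteq> M"
    using M by (auto simp: A_def)
  have "(0, 0) \<in> M"
    using \<open>G0 \<subseteq> M\<close> scaleR[of 0 0] subspace_0[OF Y] by (force simp: G0_def)
  have "\<exists>a. (x, a) \<in> M" for x
  proof -
    obtain G' where "dominated_linear_graph K G'" "M \<subseteq> G'" "\<exists>a. (x, a) \<in> G'"
      using dominated_linear_graph_extend[OF G \<open>(0, 0) \<in> M\<close> \<open>K \<ge> 0\<close>] by blast
    then show ?thesis
      using maximal[of G'] \<open>G0 \<subseteq> M\<close> by (auto simp: A_def)
  qed
  then obtain h where h: "\<And>x. (x, blinfun_apply h x) \<in> M"
    using dominated_linear_graph_blinfun[OF G] by blast
  have "blinfun_apply h y = g y" if "y \<in> Y" for y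
    using dominated_linear_graph_unique[OF G h] that \<open>G0 \<subseteq> M\<close> by (auto simp: G0_def)
  then show ?thesis
    using dominated_linear_graph_abs_le[OF G h] by blast
qed

lemma dual_sub_extension_diff:
  fixes f :: "'a::real_normed_vector \<Rightarrow>\<^sub>L real"
  assumes Y: "subspace Y" and t: "t \<in> dual_sub Y" and K0: "\<And>y. y \<in> Y \<Longrightarrow> \<bar>t y\<bar> \<le> K0 * norm y"
  shows "\<exists>e. (\<forall>y\<in>Y. blinfun_apply e y = t y - f y) \<and> norm e \<le> \<bar>K0\<bar> + norm f"
proof -
  define K where "K = \<bar>K0\<bar> + norm f"
  have "K \<ge> 0" by (simp add: K_def)
  have "\<exists>e. (\<forall>y\<in>Y. blinfun_apply e y = t y - f y) \<and> (\<forall>x. \<bar>e x\<bar> \<le> K * norm x)"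
  proof (rule hahn_banach_extension[OF Y _ _ _ \<open>K \<ge> 0\<close>])
    show "t (x + y) - f (x + y) = (t x - f x) + (t y - f y)" if "x \<in> Y" "y \<in> Y" for x y
      using dual_sub_add[OF t that] by (simp add: blinfun.add_right)
    show "t (c *\<^sub>R x) - f (c *\<^sub>R x) = c * (t x - f x)" if "x \<in> Y" for c x
      using dual_sub_scaleR[OF t that] by (simp add: blinfun.scaleR_right algebra_simps)
    show "\<bar>t y - f y\<bar> \<le> K * norm y" if "y \<in> Y" for y
    proof -
      have "\<bar>t y - f y\<bar> \<le> \<bar>K0\<bar> * norm y + norm f * norm y"
        using K0[OF that] norm_blinfun[of f y] abs_triangle_ineq4[of "t y" "f y"]
          abs_ge_self[of K0] mult_right_mono[of K0 "\<bar>K0\<bar>" "norm y"] by simp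
      then show ?thesis by (simp add: K_def algebra_simps)
    qed
  qed
  then obtain e where e_Y: "\<forall>y\<in>Y. blinfun_apply e y = t y - f y"
    and e_bound: "\<forall>x. \<bar>e x\<bar> \<le> K * norm x"
    by blast
  have "norm e \<le> K"
    using e_bound \<open>K \<ge> 0\<close> by (intro norm_blinfun_bound) auto
  then show ?thesis
    using e_Y unfolding K_def by blast
qed

section \<open>Sequential weak-star compactness of bounded sets\<close>

lemma diagonal_convergent_subseq:
  fixes u :: "nat \<Rightarrow> nat \<Rightarrow> 'a::heine_borel"
  assumes bounded: "\<And>i. bounded (range (\<lambda>n. u n i))"
  shows "\<exists>r. strict_mono r \<and> (\<forall>i. convergent (\<lambda>k. u (r k) i))"
proof -
  define P where "P i r \<longleftrightarrow> convergent (\<lambda>k. u (r k) i)" for i and r :: "nat \<Rightarrow> nat"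
  interpret subseqs P
  proof
    fix i and s :: "nat \<Rightarrow> nat"
    have "bounded (range (\<lambda>k. u (s k) i))"
      using bounded[of i] by (rule bounded_subset) auto
    then obtain l r where "strict_mono r" "((\<lambda>k. u (s k) i) \<circ> r) \<longlonglongrightarrow> l"
      using bounded_imp_convergent_subsequence by blast
    then show "\<exists>r. strict_mono r \<and> P i (s \<circ> r)"
      by (auto simp: P_def convergent_def o_def)
  qed
  have diag: "P i (diagseq \<circ> ((+) (Suc i)))" for i
  proof (rule diagseq_holds)
    fix r s n assume "strict_mono (r :: nat \<Rightarrow> nat)" "P n s"
    then show "P n (s \<circ> r)"
      using convergent_subseq_convergent[of "\<lambda>k. u (s k) n" r] by (simp add: P_def o_def)
  qed
  have "P i diagseq" for i
  proof -
    obtain l where "(\<lambda>k. u (diagseq (k + Suc i)) i) \<longlonglongrightarrow> l"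
      using diag[of i] by (auto simp: P_def convergent_def o_def add.commute)
    then have "(\<lambda>k. u (diagseq k) i) \<longlonglongrightarrow> l"
      by (rule LIMSEQ_offset)
    then show ?thesis
      unfolding P_def convergent_def by blast
  qed
  then show ?thesis
    using subseq_diagseq unfolding P_def by blast
qed

lemma norm_blinfun_apply_le:
  assumes "norm f \<le> K"
  shows "norm (blinfun_apply f x) \<le> K * norm x"
  using norm_blinfun[of f x] mult_right_mono[OF assms norm_ge_zero] by (rule order_trans)

lemma bounded_linear_pointwise_limit:
  fixes h :: "nat \<Rightarrow> 'a::real_normed_vector \<Rightarrow>\<^sub>L 'b::real_normed_vector"
  assumes lim: "\<And>x. (\<lambda>n. h n x) \<longlonglongrightarrow> L x" and bound: "\<And>n. norm (h n) \<le> K"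
  shows "bounded_linear L"
proof
  show "L (x + y) = L x + L y" for x y
    using tendsto_add[OF lim lim] lim[of "x + y"] by (simp add: blinfun.add_right LIMSEQ_unique)
  show "L (c *\<^sub>R x) = c *\<^sub>R L x" for c x
    using tendsto_scaleR[OF tendsto_const lim] lim[of "c *\<^sub>R x"]
    by (simp add: blinfun.scaleR_right LIMSEQ_unique)
  have "norm (L x) \<le> norm x * K" for x
  proof (rule LIMSEQ_le_const2[OF tendsto_norm[OF lim]])
    show "\<exists>N. \<forall>n\<ge>N. norm (h n x) \<le> norm x * K"
      using norm_blinfun_apply_le[OF bound] by (simp add: mult.commute)
  qed
  then show "\<exists>K. \<forall>x. norm (L x) \<le> norm x * K" by blast
qed

lemma convergent_blinfun_apply_if_dense:
  fixes h :: "nat \<Rightarrow> 'a::real_normed_vector \<Rightarrow>\<^sub>L 'b::banach"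
  assumes dense: "closure D = UNIV" and bound: "\<And>n. norm (h n) \<le> K"
    and conv: "\<And>d. d \<in> D \<Longrightarrow> convergent (\<lambda>n. h n d)"
  shows "convergent (\<lambda>n. h n x)"
proof -
  have "K \<ge> 0"
    using bound[of 0] norm_ge_zero order_trans by blast
  have "Cauchy (\<lambda>n. h n x)"
  proof (rule metric_CauchyI)
    fix \<epsilon> :: real assume "\<epsilon> > 0"
    then have "\<epsilon> / (3 * (K + 1)) > 0"
      using \<open>K \<ge> 0\<close> by simp
    then obtain d where "d \<in> D" and d: "dist d x < \<epsilon> / (3 * (K + 1))"
      using dense closure_approachable[of x D] by blast
    have close: "dist (h n x) (h n d) < \<epsilon> / 3" for n
    proof -
      have "dist (h n x) (h n d) \<le> K * dist d x"
        using norm_blinfun_apply_le[OF bound, of n "x - d"]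
        by (simp add: dist_norm blinfun.diff_right norm_minus_commute)
      also have "\<dots> \<le> (K + 1) * dist d x"
        by (simp add: mult_right_mono)
      also have "\<dots> < (K + 1) * (\<epsilon> / (3 * (K + 1)))"
        using d \<open>K \<ge> 0\<close> by (intro mult_strict_left_mono) auto
      also have "\<dots> = \<epsilon> / 3"
        using \<open>K \<ge> 0\<close> by (simp add: field_simps)
      finally show ?thesis .
    qed
    obtain M where M: "\<And>m n. m \<ge> M \<Longrightarrow> n \<ge> M \<Longrightarrow> dist (h m d) (h n d) < \<epsilon> / 3"
      using metric_CauchyD[OF convergent_Cauchy[OF conv[OF \<open>d \<in> D\<close>]]] \<open>\<epsilon> > 0\<close>
      by (meson divide_pos_pos zero_less_numeral)
    have "dist (h n d) (h n x) < \<epsilon> / 3" for n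
      using close[of n] by (simp only: dist_commute)
    then have "dist (h m x) (h n x) < \<epsilon>" if "m \<ge> M" "n \<ge> M" for m n
      by (rule dist_triangle_third[OF close M[OF that]])
    then show "\<exists>M. \<forall>m\<ge>M. \<forall>n\<ge>M. dist (h m x) (h n x) < \<epsilon>"
      by blast
  qed
  then show ?thesis
    by (simp add: Cauchy_convergent_iff)
qed

lemma wstar_conv_X_convergent_subseq:
  fixes h :: "nat \<Rightarrow> 'a::real_normed_vector \<Rightarrow>\<^sub>L real"
  assumes "separable_space (euclidean :: 'a topology)" and bound: "\<And>n. norm (h n) \<le> K"
  shows "\<exists>r e. strict_mono r \<and> wstar_conv_X (h \<circ> r) e"
proof -
  obtain D :: "'a set" where "countable D" and dense: "closure D = UNIV"
    using assms(1) by (auto simp: separable_space_def)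
  have bounded: "bounded (range (\<lambda>n. h n d))" for d
  proof (rule boundedI)
    fix y assume "y \<in> range (\<lambda>n. h n d)"
    then obtain n where "y = h n d"
      by blast
    then show "norm y \<le> K * norm d"
      using norm_blinfun_apply_le[OF bound[of n], of d] by (simp only:)
  qed
  obtain r where r: "strict_mono r"
    and conv: "\<And>i. convergent (\<lambda>k. h (r k) (from_nat_into D i))"
    using diagonal_convergent_subseq[of "\<lambda>n i. h n (from_nat_into D i)", OF bounded] by blast
  have conv_D: "convergent (\<lambda>k. h (r k) d)" if d: "d \<in> D" for d
  proof -
    obtain i where "d = from_nat_into D i"
      using from_nat_into_surj[OF \<open>countable D\<close> d] by metis
    then show ?thesis
      using conv by simp
  qed
  have "convergent (\<lambda>k. (h \<circ> r) k x)" for x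
  proof (rule convergent_blinfun_apply_if_dense[OF dense])
    show "norm ((h \<circ> r) n) \<le> K" for n
      using bound by simp
    show "convergent (\<lambda>k. (h \<circ> r) k d)" if "d \<in> D" for d
      using conv_D[OF that] by simp
  qed
  then have lim: "(\<lambda>k. h (r k) x) \<longlonglongrightarrow> lim (\<lambda>k. h (r k) x)" for x
    by (simp add: convergent_LIMSEQ_iff)
  define L where "L x = lim (\<lambda>k. h (r k) x)" for x
  have "bounded_linear L"
    by (rule bounded_linear_pointwise_limit[of "h \<circ> r" L K]) (simp_all add: lim bound L_def)
  then have "wstar_conv_X (h \<circ> r) (Blinfun L)"
    by (simp add: wstar_conv_X_def bounded_linear_Blinfun_apply lim L_def)
  then show ?thesis
    using r by blast
qed

lemma wstar_conv_Y_lift: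
  fixes Y :: "'a::banach set"
  assumes sep: "separable_space (euclidean :: 'a topology)"
    and Y: "subspace Y" "closed Y" and t: "\<And>n. t n \<in> dual_sub Y"
    and conv: "wstar_conv_Y Y t (restr_adj Y f)"
  shows "\<exists>s r. strict_mono r \<and> (\<forall>k. restr_adj Y (s k) = t (r k)) \<and> wstar_conv_X s f"
proof -
  have t_lim: "(\<lambda>n. t n y) \<longlonglongrightarrow> f y" if "y \<in> Y" for y
    using conv that by (simp add: wstar_conv_Y_def restr_adj_def)
  then have "bounded (range (\<lambda>n. t n y))" if "y \<in> Y" for y
    using that convergent_imp_bounded by blast
  from uniform_boundedness_dual_sub[OF Y t this]
  obtain K0 where K0: "\<And>n y. y \<in> Y \<Longrightarrow> \<bar>t n y\<bar> \<le> K0 * norm y"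
    by blast
  have "\<forall>n. \<exists>e. (\<forall>y\<in>Y. blinfun_apply e y = t n y - f y) \<and> norm e \<le> \<bar>K0\<bar> + norm f"
    using dual_sub_extension_diff[OF Y(1) t K0] by blast
  from choice[OF this] obtain e :: "nat \<Rightarrow> 'a \<Rightarrow>\<^sub>L real"
    where e_Y: "\<And>n y. y \<in> Y \<Longrightarrow> e n y = t n y - f y"
      and e_norm: "\<And>n. norm (e n) \<le> \<bar>K0\<bar> + norm f"
    by blast
  from wstar_conv_X_convergent_subseq[of e, OF sep e_norm]
  obtain r e0 where r: "strict_mono r" and e0: "wstar_conv_X (e \<circ> r) e0"
    by blast
  have e0_Y: "e0 y = 0" if "y \<in> Y" for y
  proof (rule LIMSEQ_unique)
    show "(\<lambda>k. e (r k) y) \<longlonglongrightarrow> e0 y"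
      using e0 by (simp add: wstar_conv_X_def)
    have "(\<lambda>k. t (r k) y - f y) \<longlonglongrightarrow> f y - f y"
      using LIMSEQ_subseq_LIMSEQ[OF t_lim[OF that] r] by (intro tendsto_diff) (simp_all add: o_def)
    then show "(\<lambda>k. e (r k) y) \<longlonglongrightarrow> 0"
      using e_Y[OF that] by simp
  qed
  define s where "s k = f + e (r k) - e0" for k
  have "restr_adj Y (s k) = t (r k)" for k
    using e_Y e0_Y dual_sub_outside[OF t]
    by (auto simp: restr_adj_def s_def blinfun.add_left blinfun.diff_left)
  moreover have "wstar_conv_X s f"
    unfolding wstar_conv_X_def
  proof
    fix x
    have "(\<lambda>k. e (r k) x) \<longlonglongrightarrow> e0 x"
      using e0 by (simp add: wstar_conv_X_def)
    then have "(\<lambda>k. f x + e (r k) x - e0 x) \<longlonglongrightarrow> f x + e0 x - e0 x"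
      by (intro tendsto_diff tendsto_add tendsto_const)
    then show "(\<lambda>k. s k x) \<longlonglongrightarrow> f x"
      by (simp add: s_def blinfun.add_left blinfun.diff_left)
  qed
  ultimately show ?thesis
    using r by blast
qed

theorem lemma1:
  fixes Y :: "'a::banach set" and \<Gamma> :: "('a \<Rightarrow> real) set" and \<alpha> :: "'o::wellorder"
  assumes "separable_space (euclidean :: 'a topology)"
    and "subspace Y" and "closed Y"
    and "lin_subspace_dual Y \<Gamma>"
  shows "{f. restr_adj Y f \<in> iter_derived (wstar_conv_Y Y) \<Gamma> \<alpha>}
       = iter_derived wstar_conv_X {f. restr_adj Y f \<in> \<Gamma>} \<alpha>"
proof -
  have "restr_adj Y -` iter_derived (wstar_conv_Y Y) \<Gamma> \<alpha>
      = iter_derived wstar_conv_X (restr_adj Y -` \<Gamma>) \<alpha>"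
  proof (rule vimage_iter_derived[where H = "dual_sub Y"])
    show "wstar_conv_Y Y (restr_adj Y \<circ> s) (restr_adj Y f)" if "wstar_conv_X s f" for s f
      using wstar_conv_Y_restr_adj[OF assms(2) that] .
    show "\<exists>s r. strict_mono r \<and> (\<forall>k. restr_adj Y (s k) = t (r k)) \<and> wstar_conv_X s f"
      if "\<And>n. t n \<in> dual_sub Y" and "wstar_conv_Y Y t (restr_adj Y f)" for t f
      using wstar_conv_Y_lift[OF assms(1-3) that] .
    show "\<Gamma> \<subseteq> dual_sub Y"
      using assms(4) by (simp add: lin_subspace_dual_def)
    show "g \<in> dual_sub Y" if "wstar_conv_Y Y t g" for t g
      using that by (simp add: wstar_conv_Y_def)
  qed
  then show ?thesis
    by (simp add: vimage_def)
qed

end
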